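(* Let $T=(V,E)$ be a tree with $\mathrm{pthin}(T)=2$, and let $\sigma$ be an ordering of $V$ and $S=\{V^0,V^1\}$ a partition of $V$ that are strongly consistent. Let $v_1,v_2,v_3$ be vertices with $v_1<v_2<v_3$ and $\deg(v_2)\ge 4$. Then there is no vertex $v_0$ that is the nexus between $v_1,v_2,v_3$.
   Context: For a graph $G=(V,E)$, a linear ordering $<$ of $V$ and a partition of $V$ into classes are called strongly consistent if for every triple $r<s<t$ of vertices with $rt\in E$: if $r$ and $s$ belong to the same class then $st\in E$, and if $s$ and $t$ belong to the same class then $rs\in E$. The proper thinness $\mathrm{pthin}(G)$ is the minimum $k$ such that some ordering and some partition into $k$ classes are strongly consistent. For distinct vertices $v_0,v_1,v_2,v_3$ of a tree $T$, let $C_i$ be the unique simple path from $v_0$ to $v_i$ ($i=1,2,3$) and $C_i'$ its vertex set minus $v_0$; $v_0$ is the nexus between $v_1,v_2,v_3$ if $C_1',C_2',C_3'$ are pairwise disjoint. *)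

theory Defs
  imports Main "HOL-Library.Disjoint_Sets"
begin

definition simple_graph :: "'a set \<Rightarrow> 'a set set \<Rightarrow> bool" where
  "simple_graph V E \<longleftrightarrow> finite V \<and> (\<forall>e\<in>E. \<exists>u v. e = {u, v} \<and> u \<noteq> v \<and> u \<in> V \<and> v \<in> V)"

definition simple_path :: "'a set \<Rightarrow> 'a set set \<Rightarrow> 'a \<Rightarrow> 'a \<Rightarrow> 'a list \<Rightarrow> bool" where
  "simple_path V E x y p \<longleftrightarrow> p \<noteq> [] \<and> hd p = x \<and> last p = y \<and> distinct p \<and> set p \<subseteq> V
     \<and> (\<forall>i. Suc i < length p \<longrightarrow> {p ! i, p ! Suc i} \<in> E)"

definition connected_graph :: "'a set \<Rightarrow> 'a set set \<Rightarrow> bool" where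
  "connected_graph V E \<longleftrightarrow> (\<forall>x\<in>V. \<forall>y\<in>V. \<exists>p. simple_path V E x y p)"

definition is_cycle :: "'a set \<Rightarrow> 'a set set \<Rightarrow> 'a list \<Rightarrow> bool" where
  "is_cycle V E c \<longleftrightarrow> length c \<ge> 3 \<and> distinct c \<and> set c \<subseteq> V
     \<and> (\<forall>i. Suc i < length c \<longrightarrow> {c ! i, c ! Suc i} \<in> E) \<and> {last c, hd c} \<in> E"

definition is_tree :: "'a set \<Rightarrow> 'a set set \<Rightarrow> bool" where
  "is_tree V E \<longleftrightarrow> simple_graph V E \<and> V \<noteq> {} \<and> connected_graph V E \<and> (\<nexists>c. is_cycle V E c)"

definition degree :: "'a set \<Rightarrow> 'a set set \<Rightarrow> 'a \<Rightarrow> nat" where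
  "degree V E v = card {u \<in> V. {v, u} \<in> E}"

definition same_class :: "'a set set \<Rightarrow> 'a \<Rightarrow> 'a \<Rightarrow> bool" where
  "same_class P x y \<longleftrightarrow> (\<exists>X\<in>P. x \<in> X \<and> y \<in> X)"

definition vertex_ordering :: "'a set \<Rightarrow> ('a \<times> 'a) set \<Rightarrow> bool" where
  "vertex_ordering V lt \<longleftrightarrow> lt \<subseteq> V \<times> V \<and> strict_linear_order_on V lt"

definition strongly_consistent :: "'a set \<Rightarrow> 'a set set \<Rightarrow> ('a \<times> 'a) set \<Rightarrow> 'a set set \<Rightarrow> bool" where
  "strongly_consistent V E lt P \<longleftrightarrow>
     (\<forall>r s t. (r, s) \<in> lt \<and> (s, t) \<in> lt \<and> {r, t} \<in> E \<longrightarrow>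
        (same_class P r s \<longrightarrow> {s, t} \<in> E) \<and> (same_class P s t \<longrightarrow> {r, s} \<in> E))"

definition pthin :: "'a set \<Rightarrow> 'a set set \<Rightarrow> nat" where
  "pthin V E = (LEAST k. \<exists>lt P. vertex_ordering V lt \<and> partition_on V P \<and> card P = k
                               \<and> strongly_consistent V E lt P)"

definition nexus :: "'a set \<Rightarrow> 'a set set \<Rightarrow> 'a \<Rightarrow> 'a \<Rightarrow> 'a \<Rightarrow> 'a \<Rightarrow> bool" where
  "nexus V E v0 v1 v2 v3 \<longleftrightarrow> distinct [v0, v1, v2, v3] \<and> {v0, v1, v2, v3} \<subseteq> V \<and>
     (\<exists>p1 p2 p3. simple_path V E v0 v1 p1 \<and> simple_path V E v0 v2 p2 \<and> simple_path V E v0 v3 p3 \<and>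
        (set p1 - {v0}) \<inter> (set p2 - {v0}) = {} \<and>
        (set p1 - {v0}) \<inter> (set p3 - {v0}) = {} \<and>
        (set p2 - {v0}) \<inter> (set p3 - {v0}) = {})"

end

theory Submission
  imports Defs
begin

text \<open>After reversing the ordering if necessary, the centre v0 lies below v2; the two classes are
  read as a colouring c. Strong consistency says that for r < s < t with an edge rt, the colour of s differs
  from that of r unless st is an edge, and from that of t unless rs is an edge. Neighbours of v2
  are pairwise nonadjacent in a tree, so each side of v2 holds at most one neighbour coloured like
  v2. An edge xy jumping over v2 with neither end adjacent to v2 is therefore impossible: at most
  one of the (at least four) neighbours of v2 touches xy, and all the others are coloured like v2.
  Hence the branches of the nexus towards v1 and v3, which avoid v2 and all its neighbours except
  possibly v0, stay on one side of v2. If v0 is not adjacent to v2, the branch towards v3 would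
  have to jump. Otherwise the first edge v0 y of that branch jumps over v2, and colour counting
  shows that the other neighbours of v2 lie neither between v0 and v2, nor two of them above v2,
  nor two of them below v0: there are at most two of them.\<close>

section \<open>Walks\<close>

abbreviation walk :: "'a set set \<Rightarrow> 'a list \<Rightarrow> bool" where
  "walk E \<equiv> successively (\<lambda>x y. {x, y} \<in> E)"

lemma simple_path_iff_walk:
  "simple_path V E x y p \<longleftrightarrow>
     p \<noteq> [] \<and> hd p = x \<and> last p = y \<and> distinct p \<and> set p \<subseteq> V \<and> walk E p"
  by (auto simp: simple_path_def successively_conv_nth)

lemma walk_rev: "walk E (rev xs) \<longleftrightarrow> walk E xs"
  by (simp add: insert_commute)

lemma successively_drop_take: "successively P xs \<Longrightarrow> successively P (drop i (take j xs))"
proof (unfold successively_conv_nth, intro allI impI)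
  fix k assume P: "\<forall>k. Suc k < length xs \<longrightarrow> P (xs ! k) (xs ! Suc k)"
    and "Suc k < length (drop i (take j xs))"
  then have "Suc (i + k) < length xs" "Suc (i + k) < j" by auto
  then show "P (drop i (take j xs) ! k) (drop i (take j xs) ! Suc k)"
    using P by simp
qed

lemma walk_segment:
  assumes "walk E xs" "a \<in> set xs" "b \<in> set xs"
  obtains ys where "walk E ys" "ys \<noteq> []" "hd ys = a" "last ys = b" "set ys \<subseteq> set xs"
proof -
  have segment: "\<exists>ys. walk E ys \<and> ys \<noteq> [] \<and> hd ys = xs ! i \<and> last ys = xs ! j \<and> set ys \<subseteq> set xs"
    if "i \<le> j" "j < length xs" for i j
    using that assms(1) successively_drop_take[of _ xs i "Suc j"]
    by (intro exI[of _ "drop i (take (Suc j) xs)"])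
       (auto simp: hd_drop_conv_nth last_conv_nth dest: in_set_dropD in_set_takeD)
  obtain i j where "i < length xs" "xs ! i = a" "j < length xs" "xs ! j = b"
    using assms(2,3) by (auto simp: in_set_conv_nth)
  moreover have "\<exists>ys. walk E ys \<and> ys \<noteq> [] \<and> hd ys = xs ! i \<and> last ys = xs ! j \<and> set ys \<subseteq> set xs"
  proof (cases "i \<le> j")
    case False
    then obtain ys where "walk E ys" "ys \<noteq> []" "hd ys = xs ! j" "last ys = xs ! i" "set ys \<subseteq> set xs"
      using segment[of j i] \<open>i < length xs\<close> by auto
    then show ?thesis
      by (intro exI[of _ "rev ys"]) (simp add: walk_rev hd_rev last_rev del: successively_rev)
  qed (use segment \<open>j < length xs\<close> in blast)
  ultimately show ?thesis using that by blast
qed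

lemma walk_shortcut:
  assumes "walk E xs" "xs \<noteq> []"
  shows "\<exists>ys. walk E ys \<and> distinct ys \<and> ys \<noteq> [] \<and> hd ys = hd xs \<and> last ys = last xs
           \<and> set ys \<subseteq> set xs"
  using assms
proof (induction "length xs" arbitrary: xs rule: less_induct)
  case less
  show ?case
  proof (cases "distinct xs")
    case False
    then obtain as y bs cs where xs: "xs = as @ [y] @ bs @ [y] @ cs"
      using not_distinct_decomp by blast
    let ?zs = "as @ [y] @ cs"
    have "walk E ?zs"
      using less.prems(1) by (auto simp: xs successively_append_iff successively_Cons)
    moreover have "length ?zs < length xs" "hd ?zs = hd xs" "last ?zs = last xs" "set ?zs \<subseteq> set xs"
      by (auto simp: xs hd_append)
    moreover note less.hyps[of ?zs]
    ultimately show ?thesis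
      by fastforce
  qed (use less.prems in blast)
qed

lemma walk_edge_leaving:
  assumes "walk E xs" "u \<in> set xs" "w \<in> set xs" "P u" "\<not> P w"
  shows "\<exists>a b. a \<in> set xs \<and> b \<in> set xs \<and> {a, b} \<in> E \<and> P a \<and> \<not> P b"
  using assms
proof (induction xs arbitrary: u w)
  case (Cons x xs)
  show ?case
  proof (cases xs)
    case Nil
    then show ?thesis using Cons.prems by auto
  next
    case (Cons y ys)
    have edge: "{x, y} \<in> E" and "walk E xs"
      using \<open>walk E (x # xs)\<close> by (simp_all add: Cons)
    show ?thesis
    proof (cases "P x = P y")
      case True
      then have "\<exists>u' w'. u' \<in> set xs \<and> w' \<in> set xs \<and> P u' \<and> \<not> P w'"
        using Cons.prems by (cases "P x") (auto simp: Cons)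
      then show ?thesis
        using Cons.IH \<open>walk E xs\<close> by fastforce
    next
      case False
      have "x \<in> set (x # xs)" "y \<in> set (x # xs)" "{y, x} \<in> E"
        using edge by (simp_all add: Cons insert_commute)
      then show ?thesis
        using False edge by (cases "P x") blast+
    qed
  qed
qed simp

lemma simple_pathE:
  assumes "simple_path V E x y p" "x \<noteq> y"
  obtains ms where "p = x # ms @ [y]" "walk E (x # ms)" "{last (x # ms), y} \<in> E"
    "distinct (x # ms @ [y])"
proof -
  have p: "p \<noteq> []" "hd p = x" "last p = y" "distinct p" "set p \<subseteq> V" "walk E p"
    using assms(1) by (simp_all add: simple_path_iff_walk)
  then obtain qs where qs: "p = x # qs"
    by (cases p) auto
  then have "qs \<noteq> []"
    using p(3) assms(2) by auto
  then have "p = x # butlast qs @ [y]"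
    using qs p(3) append_butlast_last_id[of qs] by simp
  moreover from this have "walk E (x # butlast qs)" "{last (x # butlast qs), y} \<in> E"
    using p(6) successively_append_iff[of _ "x # butlast qs" "[y]"] by simp_all
  ultimately show thesis
    using that p(4) by simp
qed

section \<open>Consistent colourings of ordered trees\<close>

text \<open>A partition into two classes is encoded as a colouring with values in bool. With only two
  colours, \<open>c a \<noteq> c b\<close> and \<open>c b \<noteq> c d\<close> force \<open>c a = c d\<close>; every contradiction below is three
  pairwise distinct colours.\<close>
definition consistent_colouring :: "'a set set \<Rightarrow> ('a \<times> 'a) set \<Rightarrow> ('a \<Rightarrow> bool) \<Rightarrow> bool" where
  "consistent_colouring E lt c \<longleftrightarrow>
     (\<forall>r s t. (r, s) \<in> lt \<longrightarrow> (s, t) \<in> lt \<longrightarrow> {r, t} \<in> E \<longrightarrow>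
        (c r = c s \<longrightarrow> {s, t} \<in> E) \<and> (c s = c t \<longrightarrow> {r, s} \<in> E))"

lemma strongly_consistent_two_classes:
  assumes "vertex_ordering V lt" "partition_on V S" "card S = 2" "strongly_consistent V E lt S"
  obtains c where "consistent_colouring E lt c"
proof -
  obtain X0 X1 where S: "S = {X0, X1}" "X0 \<noteq> X1"
    using assms(3) by (auto simp: card_2_iff)
  have same: "same_class S r s \<longleftrightarrow> (r \<in> X0) = (s \<in> X0)" if "r \<in> V" "s \<in> V" for r s
    using assms(2) that S
    unfolding partition_on_def pairwise_def disjnt_def same_class_def by auto
  have "consistent_colouring E lt (\<lambda>u. u \<in> X0)"
    unfolding consistent_colouring_def
  proof (intro allI impI)
    fix r s t
    assume lt: "(r, s) \<in> lt" "(s, t) \<in> lt" and "{r, t} \<in> E"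
    moreover have "r \<in> V" "s \<in> V" "t \<in> V"
      using lt assms(1) by (auto simp: vertex_ordering_def)
    ultimately show "((r \<in> X0) = (s \<in> X0) \<longrightarrow> {s, t} \<in> E) \<and> ((s \<in> X0) = (t \<in> X0) \<longrightarrow> {r, s} \<in> E)"
      using assms(4) same[of r s] same[of s t] unfolding strongly_consistent_def by blast
  qed
  then show thesis
    by (rule that)
qed

locale ordered_coloured_tree =
  fixes V :: "'a set" and E :: "'a set set" and lt :: "('a \<times> 'a) set" and c :: "'a \<Rightarrow> bool"
  assumes tree: "is_tree V E"
    and ordering: "vertex_ordering V lt"
    and consistent: "consistent_colouring E lt c"
begin

lemma reversed: "ordered_coloured_tree V E (lt\<inverse>) c"
proof
  show "vertex_ordering V (lt\<inverse>)"
    using ordering by (auto simp: vertex_ordering_def strict_linear_order_on_def)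
  show "consistent_colouring E (lt\<inverse>) c"
    unfolding consistent_colouring_def
  proof (intro allI impI)
    fix r s t
    assume "(r, s) \<in> lt\<inverse>" "(s, t) \<in> lt\<inverse>" "{r, t} \<in> E"
    then have "(t, s) \<in> lt" "(s, r) \<in> lt" "{t, r} \<in> E"
      by (auto simp: insert_commute)
    then have "(c t = c s \<longrightarrow> {s, r} \<in> E) \<and> (c s = c r \<longrightarrow> {t, s} \<in> E)"
      using consistent unfolding consistent_colouring_def by blast
    then show "(c r = c s \<longrightarrow> {s, t} \<in> E) \<and> (c s = c t \<longrightarrow> {r, s} \<in> E)"
      by (auto simp: insert_commute)
  qed
qed (rule tree)

lemma lt_in_V: "(a, b) \<in> lt \<Longrightarrow> a \<in> V \<and> b \<in> V"
  using ordering by (auto simp: vertex_ordering_def)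

lemma lt_trans: "(a, b) \<in> lt \<Longrightarrow> (b, d) \<in> lt \<Longrightarrow> (a, d) \<in> lt"
  using ordering by (meson strict_linear_order_on_def transD vertex_ordering_def)

lemma lt_irrefl: "(a, a) \<notin> lt"
  using ordering by (auto simp: vertex_ordering_def strict_linear_order_on_def irrefl_def)

lemma lt_total: "a \<in> V \<Longrightarrow> b \<in> V \<Longrightarrow> a \<noteq> b \<Longrightarrow> (a, b) \<in> lt \<or> (b, a) \<in> lt"
  using ordering by (auto simp: vertex_ordering_def strict_linear_order_on_def total_on_def)

lemma colour_differs_left:
  "(r, s) \<in> lt \<Longrightarrow> (s, t) \<in> lt \<Longrightarrow> {r, t} \<in> E \<Longrightarrow> {s, t} \<notin> E \<Longrightarrow> c r \<noteq> c s"
  using consistent unfolding consistent_colouring_def by blast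

lemma colour_differs_right:
  "(r, s) \<in> lt \<Longrightarrow> (s, t) \<in> lt \<Longrightarrow> {r, t} \<in> E \<Longrightarrow> {r, s} \<notin> E \<Longrightarrow> c s \<noteq> c t"
  using consistent unfolding consistent_colouring_def by blast

lemma finite_V: "finite V"
  using tree by (simp add: is_tree_def simple_graph_def)

lemma edge_in_V: "{a, b} \<in> E \<Longrightarrow> a \<in> V \<and> b \<in> V \<and> a \<noteq> b"
  using tree unfolding is_tree_def simple_graph_def by (metis doubleton_eq_iff insert_absorb2)

lemma walk_in_V: "walk E (x # xs) \<Longrightarrow> x \<in> V \<Longrightarrow> set (x # xs) \<subseteq> V"
  by (induction xs arbitrary: x) (auto dest: edge_in_V)

lemma walk_neighbour_unique:
  assumes "walk E xs" "v \<notin> set xs" "a \<in> set xs" "b \<in> set xs" "{v, a} \<in> E" "{v, b} \<in> E"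
  shows "a = b"
proof (rule ccontr)
  assume "a \<noteq> b"
  obtain zs where "walk E zs" "zs \<noteq> []" "hd zs = a" "last zs = b" "set zs \<subseteq> set xs"
    using walk_segment[OF assms(1,3,4)] by blast
  then obtain ys where ys: "walk E ys" "distinct ys" "ys \<noteq> []" "hd ys = a" "last ys = b"
    "set ys \<subseteq> set xs"
    using walk_shortcut[of E zs] by auto
  have "3 \<le> length (ys @ [v])"
    using ys(3-5) \<open>a \<noteq> b\<close> by (cases ys) (auto split: if_splits simp: Suc_le_eq)
  moreover have "distinct (ys @ [v])"
    using ys assms(2) by auto
  moreover have "set (ys @ [v]) \<subseteq> V"
  proof -
    have "a \<in> V" "v \<in> V"
      using edge_in_V[OF assms(5)] by simp_all
    moreover have "ys = a # tl ys"
      using ys(3,4) by (cases ys) simp_all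
    ultimately show ?thesis
      using walk_in_V[of a "tl ys"] ys(1) by simp
  qed
  moreover have "walk E (ys @ [v])"
    using ys assms(6) by (simp add: successively_append_iff insert_commute)
  ultimately have "is_cycle V E (ys @ [v])"
    using ys assms(5) by (simp add: is_cycle_def successively_conv_nth)
  then show False
    using tree by (simp add: is_tree_def)
qed

lemma neighbours_nonadjacent:
  assumes "{v, a} \<in> E" "{v, b} \<in> E" "{a, b} \<in> E"
  shows "a = b"
proof -
  have "v \<noteq> a" "v \<noteq> b"
    using assms(1,2) edge_in_V by blast+
  then show ?thesis
    using walk_neighbour_unique[of "[a, b]" v a b] assms by simp
qed

lemma neighbour_adjacent_to_walk:
  assumes "walk E xs" "v \<notin> set xs" "u \<in> set xs" "{a, u} \<in> E" "{v, a} \<in> E"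
    "b \<in> set xs" "{v, b} \<in> E"
  shows "a = b"
proof -
  obtain ys where ys: "walk E ys" "ys \<noteq> []" "hd ys = u" "last ys = b" "set ys \<subseteq> set xs"
    using walk_segment[OF assms(1,3,6)] by blast
  then have "walk E (a # ys)"
    using assms(4) by (cases ys) simp_all
  moreover have "v \<notin> set (a # ys)"
    using assms(2,5) ys(5) edge_in_V by auto
  moreover have "b \<in> set (a # ys)"
    using last_in_set[OF ys(2)] ys(4) by simp
  ultimately show ?thesis
    using walk_neighbour_unique assms(5,7) by (meson list.set_intros(1))
qed

lemma neighbours_adjacent_to_walk:
  assumes "walk E xs" "v \<notin> set xs" "u \<in> set xs" "w \<in> set xs" "{a, u} \<in> E" "{b, w} \<in> E"
    "{v, a} \<in> E" "{v, b} \<in> E"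
  shows "a = b"
proof -
  obtain ys where ys: "walk E ys" "ys \<noteq> []" "hd ys = w" "last ys = u" "set ys \<subseteq> set xs"
    using walk_segment[OF assms(1,4,3)] by blast
  then have "walk E (b # ys)"
    using assms(6) by (cases ys) simp_all
  moreover have "v \<notin> set (b # ys)"
    using assms(2,8) ys(5) edge_in_V by auto
  ultimately show ?thesis
    using neighbour_adjacent_to_walk[of "b # ys" v u a b] last_in_set[OF ys(2)] ys(4) assms(5,7,8)
    by simp
qed

lemma walk_crossing_edge:
  assumes "walk E xs" "set xs \<subseteq> V" "m \<notin> set xs"
    "u \<in> set xs" "(u, m) \<in> lt" "w \<in> set xs" "(m, w) \<in> lt"
  obtains a b where "a \<in> set xs" "b \<in> set xs" "{a, b} \<in> E" "(a, m) \<in> lt" "(m, b) \<in> lt"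
proof -
  have "(w, m) \<notin> lt"
    using assms(7) lt_trans lt_irrefl by blast
  then obtain a b where ab: "a \<in> set xs" "b \<in> set xs" "{a, b} \<in> E" "(a, m) \<in> lt" "(b, m) \<notin> lt"
    using walk_edge_leaving[OF assms(1,4,6), of "\<lambda>z. (z, m) \<in> lt"] assms(5) by blast
  moreover have "(m, b) \<in> lt"
    using lt_total[of b m] ab assms(2,3) lt_in_V[OF assms(5)] by auto
  ultimately show thesis
    using that by blast
qed

lemma card_le_1_if_unordered:
  assumes "A \<subseteq> V" "\<And>a b. a \<in> A \<Longrightarrow> b \<in> A \<Longrightarrow> (a, b) \<notin> lt"
  shows "card A \<le> 1"
proof -
  have "a = b" if "a \<in> A" "b \<in> A" for a b
    using lt_total[of a b] assms that by blast
  then show ?thesis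
    using finite_subset[OF assms(1) finite_V] by (simp add: card_le_Suc0_iff_eq)
qed

abbreviation neighbours :: "'a \<Rightarrow> 'a set" where
  "neighbours v \<equiv> {u \<in> V. {v, u} \<in> E}"

text \<open>Neighbours of v are pairwise nonadjacent, so of two neighbours above v the nearer one is
  coloured unlike v.\<close>
lemma at_most_one_like_coloured_neighbour_above:
  "card {n \<in> neighbours v. c n = c v \<and> (v, n) \<in> lt} \<le> 1"
proof (rule card_le_1_if_unordered)
  fix a b
  assume a: "a \<in> {n \<in> neighbours v. c n = c v \<and> (v, n) \<in> lt}"
    and b: "b \<in> {n \<in> neighbours v. c n = c v \<and> (v, n) \<in> lt}"
  show "(a, b) \<notin> lt"
  proof
    assume ab: "(a, b) \<in> lt"
    then have "{a, b} \<notin> E"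
      using neighbours_nonadjacent a b lt_irrefl by blast
    then show False
      using colour_differs_left[of v a b] ab a b by auto
  qed
qed auto

lemma like_coloured_neighbours: "card {n \<in> neighbours v. c n = c v} \<le> 2"
proof -
  let ?above = "{n \<in> neighbours v. c n = c v \<and> (v, n) \<in> lt}"
  let ?below = "{n \<in> neighbours v. c n = c v \<and> (n, v) \<in> lt}"
  have "card ?below \<le> 1"
    using ordered_coloured_tree.at_most_one_like_coloured_neighbour_above[OF reversed] by simp
  moreover have "{n \<in> neighbours v. c n = c v} \<subseteq> ?above \<union> ?below"
    using lt_total edge_in_V by blast
  then have "card {n \<in> neighbours v. c n = c v} \<le> card (?above \<union> ?below)"
    using finite_V by (intro card_mono) auto
  ultimately show ?thesis
    using at_most_one_like_coloured_neighbour_above[of v] card_Un_le[of ?above ?below] by linarith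
qed

lemma at_most_one_neighbour_touching_edge:
  assumes "{x, y} \<in> E" "v \<noteq> x" "v \<noteq> y"
  shows "card {n \<in> neighbours v. {n, x} \<in> E \<or> {n, y} \<in> E} \<le> 1"
proof -
  have "a = b" if a: "a \<in> neighbours v" "{a, x} \<in> E \<or> {a, y} \<in> E"
    and b: "b \<in> neighbours v" "{b, x} \<in> E \<or> {b, y} \<in> E" for a b
  proof -
    obtain u w where "u \<in> set [x, y]" "w \<in> set [x, y]" "{a, u} \<in> E" "{b, w} \<in> E"
      using a b by auto
    then show ?thesis
      using neighbours_adjacent_to_walk[of "[x, y]" v u w a b] assms a b by simp
  qed
  then show ?thesis
    using finite_V by (simp add: card_le_Suc0_iff_eq)
qed

lemma neighbour_under_edge_coloured_like:
  assumes lt: "(x, v) \<in> lt" "(v, y) \<in> lt" and xy: "{x, y} \<in> E"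
    and vx: "{x, v} \<notin> E" and vy: "{v, y} \<notin> E"
    and n: "n \<in> neighbours v" "{n, x} \<notin> E" "{n, y} \<notin> E"
  shows "c n = c v"
proof -
  have cx: "c x \<noteq> c v"
    using colour_differs_left[OF lt xy vy] .
  have cy: "c v \<noteq> c y"
    using colour_differs_right[OF lt xy vx] .
  have "n \<noteq> x" "n \<noteq> y"
    using n vx vy by (auto simp: insert_commute)
  then consider "(n, x) \<in> lt" | "(x, n) \<in> lt" "(n, y) \<in> lt" | "(y, n) \<in> lt"
    using n lt_total lt_in_V[OF lt(1)] lt_in_V[OF lt(2)] by blast
  then show ?thesis
  proof cases
    case 1
    then show ?thesis
      using colour_differs_left[OF 1 lt(1)] n vx cx by (auto simp: insert_commute)
  next
    case 2
    then show ?thesis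
      using colour_differs_left[OF 2 xy] n cx by auto
  next
    case 3
    then show ?thesis
      using colour_differs_right[OF lt(2) 3] n vy cy by auto
  qed
qed

text \<open>Otherwise at most one neighbour of v touches the edge, and all others are coloured like v.\<close>
lemma jumping_edge_adjacent:
  assumes lt: "(x, v) \<in> lt" "(v, y) \<in> lt" and xy: "{x, y} \<in> E" and deg: "4 \<le> degree V E v"
  shows "{v, x} \<in> E \<or> {v, y} \<in> E"
proof (rule ccontr)
  assume "\<not> ?thesis"
  then have vx: "{x, v} \<notin> E" and vy: "{v, y} \<notin> E"
    by (auto simp: insert_commute)
  let ?B = "{n \<in> neighbours v. {n, x} \<in> E \<or> {n, y} \<in> E}"
  have "v \<noteq> x" "v \<noteq> y"
    using lt lt_irrefl by auto
  then have "card ?B \<le> 1"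
    by (rule at_most_one_neighbour_touching_edge[OF xy])
  moreover have "neighbours v - ?B \<subseteq> {n \<in> neighbours v. c n = c v}"
    using neighbour_under_edge_coloured_like[OF lt xy vx vy] by blast
  then have "card (neighbours v - ?B) \<le> 2"
    using finite_V by (intro le_trans[OF card_mono like_coloured_neighbours]) auto
  moreover have "card (neighbours v) \<le> card (?B \<union> (neighbours v - ?B))"
    using finite_V by (intro card_mono) auto
  ultimately show False
    using deg card_Un_le[of ?B "neighbours v - ?B"] by (simp add: degree_def)
qed

lemma walk_stays_below:
  assumes "walk E p" "set p \<subseteq> V" "v \<notin> set p" "\<forall>u\<in>set p. {v, u} \<notin> E" "4 \<le> degree V E v"
    "a \<in> set p" "(a, v) \<in> lt" "b \<in> set p"
  shows "(b, v) \<in> lt"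
proof (rule ccontr)
  assume "(b, v) \<notin> lt"
  then have "(v, b) \<in> lt"
    using lt_total[of b v] assms(2,3,8) lt_in_V[OF assms(7)] by auto
  then obtain x y where "x \<in> set p" "y \<in> set p" "{x, y} \<in> E" "(x, v) \<in> lt" "(v, y) \<in> lt"
    using walk_crossing_edge assms(1-3,6-8) by blast
  then show False
    using jumping_edge_adjacent[of x v y] assms(4,5) by auto
qed

section \<open>The nexus\<close>

text \<open>The configuration of a nexus v0 below and adjacent to v2 = v: here z = v0, y is the first
  step of the branch towards v3, and p is the branch towards w = v1.\<close>
context
  fixes z v y w :: 'a and p :: "'a list"
  assumes lt: "(z, v) \<in> lt" "(v, y) \<in> lt"
    and edges: "{v, z} \<in> E" "{z, y} \<in> E" "{v, y} \<notin> E"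
    and p: "walk E p" "\<forall>u\<in>set p. (u, v) \<in> lt" "z \<in> set p" "w \<in> set p" "{v, w} \<notin> E"
begin

private lemma v_notin_walk: "v \<notin> set p"
  using p(2) lt_irrefl by blast

private lemma other_neighbour_far:
  assumes "n \<in> neighbours v - {z}"
  shows "n \<notin> set p" "u \<in> set p \<Longrightarrow> {n, u} \<notin> E" "{n, y} \<notin> E"
proof -
  show "n \<notin> set p"
    using walk_neighbour_unique[OF p(1) v_notin_walk _ p(3)] edges(1) assms by blast
  show "{n, u} \<notin> E" if "u \<in> set p"
    using neighbour_adjacent_to_walk[OF p(1) v_notin_walk that _ _ p(3) edges(1)] assms by blast
  have "v \<notin> set [y, z]"
    using lt lt_irrefl by auto
  then show "{n, y} \<notin> E"
    using neighbour_adjacent_to_walk[of "[y, z]" v y n z] edges assms by (auto simp: insert_commute)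
qed

private lemma colour_lower_neighbour: "c z \<noteq> c v"
  using colour_differs_left[OF lt edges(2,3)] .

private lemma no_neighbour_between:
  assumes "n \<in> neighbours v - {z}" "(z, n) \<in> lt" "(n, v) \<in> lt"
  shows False
proof -
  have "{z, n} \<notin> E"
    using other_neighbour_far(2)[OF assms(1) p(3)] by (simp add: insert_commute)
  then have "c n \<noteq> c v"
    using colour_differs_right[OF assms(2,3)] edges(1) by (simp add: insert_commute)
  moreover have "c z \<noteq> c n"
    using colour_differs_left[OF assms(2) lt_trans[OF assms(3) lt(2)] edges(2)]
      other_neighbour_far(3)[OF assms(1)] by blast
  ultimately show False
    using colour_lower_neighbour by blast
qed

private lemma at_most_one_neighbour_above: "card {n \<in> neighbours v - {z}. (v, n) \<in> lt} \<le> 1"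
proof (rule card_le_1_if_unordered)
  fix a b
  assume a: "a \<in> {n \<in> neighbours v - {z}. (v, n) \<in> lt}"
    and b: "b \<in> {n \<in> neighbours v - {z}. (v, n) \<in> lt}"
  show "(a, b) \<notin> lt"
  proof
    assume ab: "(a, b) \<in> lt"
    then have "{a, b} \<notin> E"
      using neighbours_nonadjacent a b lt_irrefl by blast
    then have ca: "c a \<noteq> c v"
      using colour_differs_left[of v a b] ab a b by auto
    have "a \<noteq> y"
      using a edges(3) by blast
    then consider "(a, y) \<in> lt" | "(y, a) \<in> lt"
      using lt_total a lt_in_V[OF lt(2)] by blast
    then show False
    proof cases
      case 1
      then have "c z \<noteq> c a"
        using colour_differs_left[OF lt_trans[OF lt(1)] _ edges(2)] a other_neighbour_far(3)[of a]
        by (auto simp: insert_commute)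
      then show False
        using ca colour_lower_neighbour by blast
    next
      case 2
      have "{y, a} \<notin> E"
        using other_neighbour_far(3)[of a] a by (auto simp: insert_commute)
      then have "c v \<noteq> c y" "c y \<noteq> c a"
        using colour_differs_left[OF lt(2) 2] colour_differs_right[OF lt(2) 2] a edges(3) by auto
      then show False
        using ca by blast
    qed
  qed
qed auto

private lemma at_most_one_neighbour_below: "card {n \<in> neighbours v - {z}. (n, z) \<in> lt} \<le> 1"
proof (rule card_le_1_if_unordered)
  fix a b
  assume a: "a \<in> {n \<in> neighbours v - {z}. (n, z) \<in> lt}"
    and b: "b \<in> {n \<in> neighbours v - {z}. (n, z) \<in> lt}"
  show "(a, b) \<notin> lt"
  proof
    assume ab: "(a, b) \<in> lt"
    have bv: "(b, v) \<in> lt"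
      using b lt_trans lt(1) by blast
    have "{a, b} \<notin> E"
      using neighbours_nonadjacent a b ab lt_irrefl by blast
    then have cb: "c b \<noteq> c v"
      using colour_differs_right[OF ab bv] a by (auto simp: insert_commute)
    have pV: "set p \<subseteq> V"
      using p(2) lt_in_V by blast
    have "w \<noteq> b"
      using other_neighbour_far(1)[of b] b p(4) by blast
    then consider "(b, w) \<in> lt" | "(w, b) \<in> lt"
      using lt_total b pV p(4) by blast
    then show False
    proof cases
      case 1
      have "{b, w} \<notin> E" "{w, v} \<notin> E"
        using other_neighbour_far(2)[of b w] b p(4,5) by (auto simp: insert_commute)
      moreover have "(w, v) \<in> lt" "{b, v} \<in> E"
        using p(2,4) b by (auto simp: insert_commute)
      ultimately have "c b \<noteq> c w" "c w \<noteq> c v"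
        using colour_differs_left[OF 1] colour_differs_right[OF 1] by blast+
      then show False
        using cb by blast
    next
      case 2
      obtain x m where xm: "x \<in> set p" "m \<in> set p" "{x, m} \<in> E" "(x, b) \<in> lt" "(b, m) \<in> lt"
        using walk_crossing_edge[OF p(1) pV other_neighbour_far(1)[of b] p(4) 2 p(3)] b by auto
      have "{b, x} \<notin> E" "{b, m} \<notin> E"
        using other_neighbour_far(2)[of b] b xm(1,2) by blast+
      then have "c b \<noteq> c m" "c m \<noteq> c v"
        using colour_differs_right[OF xm(4,5,3)] colour_differs_right[OF xm(5)] p(2) xm(2) b
        by (auto simp: insert_commute)
      then show False
        using cb by blast
    qed
  qed
qed auto

lemma degree_le_3_if_neighbour_jumps: "degree V E v \<le> 3"
proof -
  let ?N = "neighbours v - {z}"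
  have "?N \<subseteq> {n \<in> ?N. (v, n) \<in> lt} \<union> {n \<in> ?N. (n, z) \<in> lt}"
  proof
    fix n
    assume n: "n \<in> ?N"
    then have "n \<noteq> v" "n \<noteq> z" "n \<in> V"
      using edge_in_V by auto
    then show "n \<in> {n \<in> ?N. (v, n) \<in> lt} \<union> {n \<in> ?N. (n, z) \<in> lt}"
      using n lt_total no_neighbour_between lt_in_V[OF lt(1)] by blast
  qed
  then have "card ?N \<le> card ({n \<in> ?N. (v, n) \<in> lt} \<union> {n \<in> ?N. (n, z) \<in> lt})"
    using finite_V by (intro card_mono) auto
  moreover have "z \<in> neighbours v"
    using edges(1) lt_in_V[OF lt(1)] by blast
  then have "card ?N = degree V E v - 1"
    using finite_V by (simp add: degree_def)
  ultimately show ?thesis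
    using at_most_one_neighbour_above at_most_one_neighbour_below
      card_Un_le[of "{n \<in> ?N. (v, n) \<in> lt}" "{n \<in> ?N. (n, z) \<in> lt}"]
    by linarith
qed

end

lemma nexus_branch:
  assumes "simple_path V E v0 b p" "simple_path V E v0 v q" "v0 \<noteq> b" "v0 \<noteq> v"
    "(set p - {v0}) \<inter> (set q - {v0}) = {}"
  obtains t where "p = v0 # t" "walk E p" "set p \<subseteq> V" "b \<in> set t" "v \<notin> set p"
    "\<forall>u\<in>set t. {v, u} \<notin> E"
proof -
  obtain ms' where p: "p = v0 # ms' @ [b]" "distinct p"
    using simple_pathE[OF assms(1,3)] by blast
  have pw: "walk E p" "set p \<subseteq> V" "last (rev p) = v0"
    using assms(1) by (simp_all add: simple_path_iff_walk last_rev)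
  obtain ms where q: "q = v0 # ms @ [v]" "walk E (v0 # ms)" "{last (v0 # ms), v} \<in> E"
    "distinct (v0 # ms @ [v])"
    using simple_pathE[OF assms(2,4)] by blast
  have v: "v \<notin> set p"
    using q(1) assms(4,5) by auto
  have "{v, u} \<notin> E" if u: "u \<in> set (ms' @ [b])" for u
  proof
    assume vu: "{v, u} \<in> E"
    have "walk E (rev p @ ms)"
      using pw q(2)
      by (cases ms) (auto simp: walk_rev successively_append_iff simp del: successively_rev)
    moreover have "v \<notin> set (rev p @ ms)" "u \<in> set (rev p @ ms)" "last (v0 # ms) \<in> set (rev p @ ms)"
      using v u q(4) p(1) last_in_set[of "v0 # ms"] by auto
    moreover have "{v, last (v0 # ms)} \<in> E"
      using q(3) by (simp add: insert_commute)
    ultimately have "u = last (v0 # ms)"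
      using walk_neighbour_unique vu by blast
    moreover have "u \<noteq> v0"
      using u p by auto
    ultimately have "u \<in> set q - {v0}"
      using q(1) by (cases ms rule: rev_cases) auto
    moreover have "u \<in> set p - {v0}"
      using u p(1) \<open>u \<noteq> v0\<close> by auto
    ultimately show False
      using assms(5) by blast
  qed
  then show thesis
    using that[of "ms' @ [b]"] p(1) pw(1,2) v by auto
qed

lemma degree_le_3_if_nexus_below:
  assumes nexus: "nexus V E v0 v1 v2 v3" and lt: "(v1, v2) \<in> lt" "(v2, v3) \<in> lt" "(v0, v2) \<in> lt"
  shows "degree V E v2 \<le> 3"
proof (rule ccontr)
  assume "\<not> ?thesis"
  then have deg: "4 \<le> degree V E v2"
    by simp
  obtain p1 p2 p3 where distinct: "distinct [v0, v1, v2, v3]"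
    and paths: "simple_path V E v0 v1 p1" "simple_path V E v0 v2 p2" "simple_path V E v0 v3 p3"
    and disjoint: "(set p1 - {v0}) \<inter> (set p2 - {v0}) = {}" "(set p3 - {v0}) \<inter> (set p2 - {v0}) = {}"
    using nexus unfolding nexus_def by (auto simp: Int_commute)
  then have ne: "v0 \<noteq> v1" "v0 \<noteq> v2" "v0 \<noteq> v3"
    by auto
  obtain t1 where p1: "p1 = v0 # t1" "walk E p1" "set p1 \<subseteq> V" "v1 \<in> set t1" "v2 \<notin> set p1"
    "\<forall>u\<in>set t1. {v2, u} \<notin> E"
    by (rule nexus_branch[OF paths(1,2) ne(1,2) disjoint(1)])
  obtain t3 where p3: "p3 = v0 # t3" "walk E p3" "set p3 \<subseteq> V" "v3 \<in> set t3" "v2 \<notin> set p3"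
    "\<forall>u\<in>set t3. {v2, u} \<notin> E"
    by (rule nexus_branch[OF paths(3,2) ne(3,2) disjoint(2)])
  have t1: "walk E t1" "set t1 \<subseteq> V" "v2 \<notin> set t1" and t3: "walk E t3" "set t3 \<subseteq> V" "v2 \<notin> set t3"
    using p1(1-3,5) p3(1-3,5) by (auto simp: successively_Cons)
  have below: "\<forall>u\<in>set p1. (u, v2) \<in> lt"
    using walk_stays_below[OF t1 p1(6) deg p1(4) lt(1)] lt(3) p1(1) by simp
  let ?y = "hd t3"
  have "t3 \<noteq> []"
    using p3(4) by auto
  then have y: "?y \<in> set t3" "{v0, ?y} \<in> E"
    using p3(1,2) by (auto simp: successively_Cons)
  have "(v2, ?y) \<in> lt"
    using ordered_coloured_tree.walk_stays_below[OF reversed t3 p3(6) deg p3(4) _ y(1)] lt(2) by simp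
  show False
  proof (cases "{v2, v0} \<in> E")
    case True
    have "{v2, ?y} \<notin> E" "v0 \<in> set p1" "v1 \<in> set p1" "{v2, v1} \<notin> E"
      using p1(1,4,6) p3(6) y(1) by simp_all
    then have "degree V E v2 \<le> 3"
      using degree_le_3_if_neighbour_jumps[OF lt(3) \<open>(v2, ?y) \<in> lt\<close> True y(2) _ p1(2) below]
      by blast
    then show False
      using deg by simp
  next
    case False
    then have "\<forall>u\<in>set p3. {v2, u} \<notin> E" "v0 \<in> set p3" "v3 \<in> set p3"
      using p3(1,4,6) by simp_all
    then have "(v3, v2) \<in> lt"
      using walk_stays_below[OF p3(2,3,5) _ deg _ lt(3)] by blast
    then show False
      using lt(2) lt_trans lt_irrefl by blast
  qed
qed

end

lemma nexus_swap: "nexus V E v0 v1 v2 v3 \<Longrightarrow> nexus V E v0 v3 v2 v1"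
  unfolding nexus_def by (simp add: Int_commute) blast

theorem corollaryA8:
  fixes V :: "'a set" and E :: "'a set set" and lt :: "('a \<times> 'a) set" and S :: "'a set set"
  assumes "is_tree V E"
    and "pthin V E = 2"
    and "vertex_ordering V lt"
    and "partition_on V S" and "card S = 2"
    and "strongly_consistent V E lt S"
    and "v1 \<in> V" and "v2 \<in> V" and "v3 \<in> V"
    and "(v1, v2) \<in> lt" and "(v2, v3) \<in> lt"
    and "degree V E v2 \<ge> 4"
  shows "\<not> (\<exists>v0. nexus V E v0 v1 v2 v3)"
proof
  assume "\<exists>v0. nexus V E v0 v1 v2 v3"
  then obtain v0 where nexus: "nexus V E v0 v1 v2 v3" ..
  obtain c where "consistent_colouring E lt c"
    using strongly_consistent_two_classes assms(3-6) by blast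
  then interpret ordered_coloured_tree V E lt c
    using assms(1,3) by unfold_locales
  have "v0 \<in> V" "v0 \<noteq> v2"
    using nexus by (auto simp: nexus_def)
  then consider "(v0, v2) \<in> lt" | "(v2, v0) \<in> lt"
    using lt_total assms(8) by blast
  then have "degree V E v2 \<le> 3"
  proof cases
    case 1
    then show ?thesis
      using degree_le_3_if_nexus_below[OF nexus assms(10,11)] by blast
  next
    case 2
    then show ?thesis
      using ordered_coloured_tree.degree_le_3_if_nexus_below[OF reversed nexus_swap[OF nexus]]
        assms(10,11) by simp
  qed
  then show False
    using assms(12) by simp
qed

end
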